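(* Let $X$ be a CAT(0) space, $C\subseteq X$ a totally bounded subset with II-modulus of total boundedness $\gamma$ and $b>0$ an upper bound on the diameter of $C$, $\lambda\in(0,1)$, and $T:C\to C$ a $\lambda$-firmly nonexpansive mapping with $\mathrm{Fix}(T)\ne\emptyset$. Let $x\in C$ and $x_n:=T^nx$. Then for all $k\in\mathbb{N}$ and $g:\mathbb{N}\to\mathbb{N}$ there exists $N\le\Theta_0(\gamma^M(4k+3))+K$ such that for all $i,j\in[N,N+g(N)]$ and all $m\ge N$: $d(x_i,x_j)\le\frac1{k+1}$ and $d(x_m,Tx_m)\le\frac1{k+1}$. Here $c=\left\lceil\frac{8(b+1)^2}{\lambda(1-\lambda)}\right\rceil$, $K=c(k+1)^2$, $\Theta_0(0)=0$ and $\Theta_0(n+1)=c\big((g^M(\Theta_0(n)+K)+K)(4k+4)\big)^2$.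
   Context: In a CAT(0) space, $(1-\lambda)x+\lambda y$ denotes the point on the geodesic segment from $x$ to $y$ at distance $\lambda d(x,y)$ from $x$. $T:C\to C$ is $\lambda$-firmly nonexpansive if $d(Tx,Ty)\le d((1-\lambda)x+\lambda Tx,(1-\lambda)y+\lambda Ty)\le d(x,y)$ for all $x,y\in C$. II-modulus $\gamma$ for $C$: for every $k$ and every sequence $(y_n)$ in $C$ there are $0\le i<j\le\gamma(k)$ with $d(y_i,y_j)\le\frac1{k+1}$. For $f:\mathbb{N}\to\mathbb{N}$, $f^M(n):=\max\{f(i)\mid i\le n\}$. *)

theory Defs
  imports "HOL-Analysis.Analysis"
begin

definition geodesic_path :: "'a::metric_space \<Rightarrow> 'a \<Rightarrow> (real \<Rightarrow> 'a) \<Rightarrow> bool" where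
  "geodesic_path x y g \<longleftrightarrow> g 0 = x \<and> g 1 = y \<and>
     (\<forall>s\<in>{0..1}. \<forall>t\<in>{0..1}. dist (g s) (g t) = \<bar>s - t\<bar> * dist x y)"

text \<open>CAT(0) space: a geodesic space in which every point on a side of a geodesic triangle
  is at distance from the opposite vertex at most the corresponding Euclidean comparison distance.\<close>
definition CAT0 :: "'a::metric_space set \<Rightarrow> bool" where
  "CAT0 X \<longleftrightarrow>
     (\<forall>x\<in>X. \<forall>y\<in>X. \<exists>g. geodesic_path x y g \<and> g ` {0..1} \<subseteq> X) \<and>
     (\<forall>x\<in>X. \<forall>y\<in>X. \<forall>z\<in>X. \<forall>g. geodesic_path y z g \<and> g ` {0..1} \<subseteq> X \<longrightarrow>
        (\<forall>t\<in>{0..1}. (dist x (g t))\<^sup>2 \<le>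
           (1 - t) * (dist x y)\<^sup>2 + t * (dist x z)\<^sup>2 - t * (1 - t) * (dist y z)\<^sup>2))"

text \<open>(1-t)x + t y: the point on the (unique) geodesic segment in X from x to y
  at distance t * d(x,y) from x.\<close>
definition geo :: "'a::metric_space set \<Rightarrow> 'a \<Rightarrow> 'a \<Rightarrow> real \<Rightarrow> 'a" where
  "geo X x y t = (THE p. \<exists>g. geodesic_path x y g \<and> g ` {0..1} \<subseteq> X \<and> g t = p)"

definition firmly_nonexp :: "'a::metric_space set \<Rightarrow> real \<Rightarrow> 'a set \<Rightarrow> ('a \<Rightarrow> 'a) \<Rightarrow> bool" where
  "firmly_nonexp X lam C T \<longleftrightarrow> (\<forall>x\<in>C. \<forall>y\<in>C.
     dist (T x) (T y) \<le> dist (geo X x (T x) lam) (geo X y (T y) lam) \<and>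
     dist (geo X x (T x) lam) (geo X y (T y) lam) \<le> dist x y)"

definition II_modulus :: "'a::metric_space set \<Rightarrow> (nat \<Rightarrow> nat) \<Rightarrow> bool" where
  "II_modulus C \<gamma> \<longleftrightarrow> (\<forall>k. \<forall>y::nat \<Rightarrow> 'a. (\<forall>n. y n \<in> C) \<longrightarrow>
     (\<exists>i j. i < j \<and> j \<le> \<gamma> k \<and> dist (y i) (y j) \<le> 1 / (real k + 1)))"

definition maxf :: "(nat \<Rightarrow> nat) \<Rightarrow> nat \<Rightarrow> nat" where
  "maxf f n = Max (f ` {..n})"

primrec Theta0 :: "nat \<Rightarrow> nat \<Rightarrow> (nat \<Rightarrow> nat) \<Rightarrow> nat \<Rightarrow> nat \<Rightarrow> nat" where
  "Theta0 c K g k 0 = 0"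
| "Theta0 c K g k (Suc n) = c * ((maxf g (Theta0 c K g k n + K) + K) * (4 * k + 4))\<^sup>2"

end

theory Submission
  imports Defs
begin

text \<open>For a fixed point p, firm nonexpansiveness and the CN inequality of CAT(0) give the
  Fejer-type inequality d(Tu,p)^2 <= d(u,p)^2 - lam d(u,Tu)^2. Summing along the orbit and using
  that the displacements d(x_n, x_(n+1)) decrease yields lam n d(x_n, x_(n+1))^2 <= b^2, so x_m is
  a 1/R-fixed point as soon as m >= c R^2. Applying the II-modulus to the sparse subsequence
  x_(Theta0(n)+K) gives indices i < j with x_N, N = Theta0(i)+K, close to z = x_(Theta0(j)+K).
  As Theta0(j) >= Theta0(i+1), the point z is so nearly fixed that, by nonexpansiveness, the
  orbit starting at x_N cannot drift away from z within the window [N, N + g N].\<close>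

lemma CAT0_geodesic_exists:
  assumes "CAT0 X" "x \<in> X" "y \<in> X"
  obtains g where "geodesic_path x y g" "g ` {0..1} \<subseteq> X"
  using assms unfolding CAT0_def by meson

lemma CAT0_CN_inequality:
  assumes "CAT0 X" "x \<in> X" "y \<in> X" "z \<in> X" "geodesic_path y z g" "g ` {0..1} \<subseteq> X"
    and "t \<in> {0..1}"
  shows "(dist x (g t))\<^sup>2 \<le> (1 - t) * (dist x y)\<^sup>2 + t * (dist x z)\<^sup>2 - t * (1 - t) * (dist y z)\<^sup>2"
  using assms unfolding CAT0_def by blast

lemma geodesic_path_dist_endpoints:
  assumes "geodesic_path x y g" "t \<in> {0..1}"
  shows "dist (g t) x = t * dist x y" "dist (g t) y = (1 - t) * dist x y"
proof -
  have "g 0 = x" "g 1 = y" and gd: "\<And>s r. s \<in> {0..1} \<Longrightarrow> r \<in> {0..1} \<Longrightarrow>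
      dist (g s) (g r) = \<bar>s - r\<bar> * dist x y"
    using assms(1) unfolding geodesic_path_def by auto
  then show "dist (g t) x = t * dist x y" "dist (g t) y = (1 - t) * dist x y"
    using gd[of t 0] gd[of t 1] assms(2) by auto
qed

text \<open>Geodesics in a CAT(0) space are unique, so \<open>geo\<close> (a definite description) evaluates
  any geodesic joining the two points.\<close>
lemma geo_eq:
  assumes cat: "CAT0 X" and g: "geodesic_path x y g" "g ` {0..1} \<subseteq> X"
    and xy: "x \<in> X" "y \<in> X" and t: "t \<in> {0..1}"
  shows "geo X x y t = g t"
  unfolding geo_def
proof (rule the_equality)
  show "\<exists>g'. geodesic_path x y g' \<and> g' ` {0..1} \<subseteq> X \<and> g' t = g t" using g by blast
next
  fix p assume "\<exists>g'. geodesic_path x y g' \<and> g' ` {0..1} \<subseteq> X \<and> g' t = p"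
  then obtain g' where g': "geodesic_path x y g'" "g' ` {0..1} \<subseteq> X" "g' t = p" by blast
  have "g' t \<in> X" using g' t by auto
  then have "(dist (g' t) (g t))\<^sup>2 \<le>
      (1 - t) * (dist (g' t) x)\<^sup>2 + t * (dist (g' t) y)\<^sup>2 - t * (1 - t) * (dist x y)\<^sup>2"
    using CAT0_CN_inequality[OF cat _ xy g t] by blast
  also have "\<dots> = (1 - t) * (t * dist x y)\<^sup>2 + t * ((1 - t) * dist x y)\<^sup>2 - t * (1 - t) * (dist x y)\<^sup>2"
    using geodesic_path_dist_endpoints[OF g'(1) t] by simp
  also have "\<dots> = 0" by (simp add: power2_eq_square algebra_simps)
  finally show "p = g t" using g'(3) by simp
qed

lemma geo_same_point:
  assumes "CAT0 X" "p \<in> X" "t \<in> {0..1}"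
  shows "geo X p p t = p"
proof -
  obtain g where g: "geodesic_path p p g" "g ` {0..1} \<subseteq> X"
    using CAT0_geodesic_exists[OF assms(1,2,2)] .
  have "dist (g t) p = 0" using geodesic_path_dist_endpoints(1)[OF g(1) assms(3)] by simp
  then show ?thesis using geo_eq[OF assms(1) g assms(2,2,3)] by simp
qed

lemma maxf_ge: "f n \<le> maxf f n"
  unfolding maxf_def by (rule Max_ge) auto

lemma maxf_mono: "a \<le> a' \<Longrightarrow> maxf f a \<le> maxf f a'"
  unfolding maxf_def by (rule Max_mono) auto

lemma Theta0_mono:
  assumes "i \<le> j"
  shows "Theta0 c K g k i \<le> Theta0 c K g k j"
proof -
  have "Theta0 c K g k n \<le> Theta0 c K g k (Suc n)" for n
  proof (induction n)
    case (Suc n)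
    then have "maxf g (Theta0 c K g k n + K) \<le> maxf g (Theta0 c K g k (Suc n) + K)"
      by (intro maxf_mono) simp
    then show ?case
      by (simp only: Theta0.simps) (intro mult_le_mono2 power_mono mult_le_mono1 add_le_mono1, auto)
  qed simp
  then show ?thesis using assms by (rule lift_Suc_mono_le)
qed

lemma rate_constant_bounds:
  fixes b lam :: real
  assumes "0 < b" "0 < lam" "lam < 1"
  defines "c \<equiv> nat \<lceil>8 * (b + 1)\<^sup>2 / (lam * (1 - lam))\<rceil>"
  shows "1 \<le> c" "b\<^sup>2 \<le> real c * lam"
proof -
  have "8 * (b + 1)\<^sup>2 \<le> 8 * (b + 1)\<^sup>2 / (lam * (1 - lam)) * lam"
    using assms(2,3) by (simp add: field_simps)
  also have "\<dots> \<le> real c * lam"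
    unfolding c_def using assms(2) by (intro mult_right_mono real_nat_ceiling_ge) simp_all
  finally have bound: "8 * (b + 1)\<^sup>2 \<le> real c * lam" .
  have "b\<^sup>2 \<le> 8 * (b + 1)\<^sup>2" "8 \<le> 8 * (b + 1)\<^sup>2"
    using assms(1) by (simp_all add: power2_eq_square algebra_simps)
  moreover have "real c * lam \<le> real c" using assms(3) by (simp add: mult_left_le)
  ultimately show "1 \<le> c" "b\<^sup>2 \<le> real c * lam" using bound by linarith+
qed

locale firmly_nonexp_self_map =
  fixes X C :: "'a::metric_space set" and lam :: real and T :: "'a \<Rightarrow> 'a"
  assumes CAT0: "CAT0 X" and C_subset: "C \<subseteq> X"
    and lam_pos: "0 < lam" and lam_less_1: "lam < 1"
    and maps_to: "T ` C \<subseteq> C" and firmly_nonexp: "firmly_nonexp X lam C T"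
begin

lemma nonexpansive: "u \<in> C \<Longrightarrow> v \<in> C \<Longrightarrow> dist (T u) (T v) \<le> dist u v"
  using firmly_nonexp unfolding firmly_nonexp_def by (meson order_trans)

lemma orbit_in: "x \<in> C \<Longrightarrow> (T ^^ n) x \<in> C"
  by (induction n) (use maps_to in auto)

lemma fejer_inequality:
  assumes p: "p \<in> C" "T p = p" and u: "u \<in> C"
  shows "(dist (T u) p)\<^sup>2 \<le> (dist u p)\<^sup>2 - lam * (dist u (T u))\<^sup>2"
proof -
  have uX: "u \<in> X" "T u \<in> X" "p \<in> X" using u p maps_to C_subset by auto
  have lam01: "lam \<in> {0..1}" using lam_pos lam_less_1 by auto
  obtain g where g: "geodesic_path u (T u) g" "g ` {0..1} \<subseteq> X"
    using CAT0_geodesic_exists[OF CAT0 uX(1,2)] .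
  have "dist (T u) (T p) \<le> dist (geo X u (T u) lam) (geo X p (T p) lam)"
    using firmly_nonexp u p unfolding firmly_nonexp_def by blast
  then have "dist (T u) p \<le> dist p (g lam)"
    using geo_eq[OF CAT0 g uX(1,2) lam01] geo_same_point[OF CAT0 uX(3) lam01] p
    by (simp add: dist_commute)
  then have "(dist (T u) p)\<^sup>2 \<le> (dist p (g lam))\<^sup>2" by (simp add: power_mono)
  also have "\<dots> \<le> (1 - lam) * (dist u p)\<^sup>2 + lam * (dist (T u) p)\<^sup>2 - lam * (1 - lam) * (dist u (T u))\<^sup>2"
    using CAT0_CN_inequality[OF CAT0 uX(3) uX(1,2) g lam01] by (simp add: dist_commute)
  finally have "(1 - lam) * ((dist (T u) p)\<^sup>2 - (dist u p)\<^sup>2 + lam * (dist u (T u))\<^sup>2) \<le> 0"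
    by (simp add: algebra_simps)
  then show ?thesis using lam_less_1 by (simp add: mult_le_0_iff)
qed

lemma orbit_displacement_antimono:
  assumes "x \<in> C" "l \<le> m"
  shows "dist ((T ^^ m) x) (T ((T ^^ m) x)) \<le> dist ((T ^^ l) x) (T ((T ^^ l) x))"
proof -
  have "dist (T ((T ^^ n) x)) (T (T ((T ^^ n) x))) \<le> dist ((T ^^ n) x) (T ((T ^^ n) x))" for n
    using nonexpansive[OF orbit_in orbit_in, OF assms(1) assms(1), of n "Suc n"] by simp
  then have "decseq (\<lambda>n. dist ((T ^^ n) x) (T ((T ^^ n) x)))"
    by (intro decseq_SucI) simp
  from decseqD[OF this assms(2)] show ?thesis by simp
qed

lemma fejer_orbit_sum:
  assumes "p \<in> C" "T p = p" "x \<in> C"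
  shows "(dist ((T ^^ n) x) p)\<^sup>2 + lam * (\<Sum>l<n. (dist ((T ^^ l) x) (T ((T ^^ l) x)))\<^sup>2)
    \<le> (dist x p)\<^sup>2"
proof (induction n)
  case (Suc n)
  then show ?case
    using fejer_inequality[OF assms(1,2) orbit_in[OF assms(3)], of n] by (simp add: algebra_simps)
qed simp

lemma asymptotic_regularity:
  assumes "p \<in> C" "T p = p" "x \<in> C" and diam: "\<forall>u\<in>C. \<forall>v\<in>C. dist u v \<le> b"
  shows "lam * real n * (dist ((T ^^ n) x) (T ((T ^^ n) x)))\<^sup>2 \<le> b\<^sup>2"
proof -
  let ?d = "\<lambda>l. dist ((T ^^ l) x) (T ((T ^^ l) x))"
  have "real n * (?d n)\<^sup>2 \<le> (\<Sum>l<n. (?d l)\<^sup>2)"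
    using sum_mono[of "{..<n}" "\<lambda>_. (?d n)\<^sup>2" "\<lambda>l. (?d l)\<^sup>2"]
      orbit_displacement_antimono[OF assms(3)] by (simp add: power_mono)
  then have "lam * real n * (?d n)\<^sup>2 \<le> lam * (\<Sum>l<n. (?d l)\<^sup>2)"
    using lam_pos by (simp add: mult.assoc)
  also have "\<dots> \<le> (dist x p)\<^sup>2"
    using fejer_orbit_sum[OF assms(1-3), of n] zero_le_power2[of "dist ((T ^^ n) x) p"] by linarith
  also have "\<dots> \<le> b\<^sup>2" using diam assms(1,3) by (simp add: power_mono)
  finally show ?thesis .
qed

lemma orbit_displacement_rate:
  assumes "p \<in> C" "T p = p" "x \<in> C" "\<forall>u\<in>C. \<forall>v\<in>C. dist u v \<le> b"
    and c: "0 < c" "b\<^sup>2 \<le> c * lam" and R: "0 < R" "c * R\<^sup>2 \<le> real m"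
  shows "dist ((T ^^ m) x) (T ((T ^^ m) x)) \<le> 1 / R"
proof -
  define d where "d = dist ((T ^^ m) x) (T ((T ^^ m) x))"
  have "c * R\<^sup>2 * d\<^sup>2 \<le> real m * d\<^sup>2"
    using R(2) by (simp add: mult_right_mono)
  then have "lam * c * (d * R)\<^sup>2 \<le> lam * real m * d\<^sup>2"
    using lam_pos by (simp add: power_mult_distrib ac_simps)
  also have "\<dots> \<le> lam * c * 1"
    using asymptotic_regularity[OF assms(1-4), of m] c(2) unfolding d_def by (simp add: ac_simps)
  finally have "(d * R)\<^sup>2 \<le> 1\<^sup>2" using lam_pos c(1) by simp
  then have "d * R \<le> 1" by (rule power2_le_imp_le) simp
  then show ?thesis using R(1) unfolding d_def by (simp add: le_divide_eq)
qed

lemma orbit_drift: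
  assumes "u \<in> C" "z \<in> C"
  shows "dist ((T ^^ s) u) z \<le> dist u z + real s * dist z (T z)"
proof (induction s)
  case (Suc s)
  have "dist ((T ^^ Suc s) u) z \<le> dist (T ((T ^^ s) u)) (T z) + dist z (T z)"
    using dist_triangle[of "T ((T ^^ s) u)" z "T z"] by (simp add: dist_commute)
  also have "\<dots> \<le> dist ((T ^^ s) u) z + dist z (T z)"
    using nonexpansive[OF orbit_in[OF assms(1)] assms(2)] by simp
  finally show ?case using Suc by (simp add: algebra_simps)
qed simp

lemma orbit_segment_close:
  assumes "u \<in> C" "z \<in> C" "i \<le> s" "j \<le> s"
  shows "dist ((T ^^ i) u) ((T ^^ j) u) \<le> 2 * (dist u z + real s * dist z (T z))"
proof -
  have "real i * dist z (T z) \<le> real s * dist z (T z)" "real j * dist z (T z) \<le> real s * dist z (T z)"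
    using assms(3,4) by (simp_all add: mult_right_mono)
  then show ?thesis
    using dist_triangle2[of "(T ^^ i) u" "(T ^^ j) u" z] orbit_drift[OF assms(1,2), of i]
      orbit_drift[OF assms(1,2), of j] by argo
qed

lemma orbit_window_close:
  assumes "x \<in> C" "z \<in> C" "a \<in> {N..N + s}" "a' \<in> {N..N + s}"
  shows "dist ((T ^^ a) x) ((T ^^ a') x) \<le> 2 * (dist ((T ^^ N) x) z + real s * dist z (T z))"
proof -
  have shift: "(T ^^ t) x = (T ^^ (t - N)) ((T ^^ N) x)" if "N \<le> t" for t
    using that by (metis funpow_add comp_apply le_add_diff_inverse2)
  show ?thesis
    using orbit_segment_close[OF orbit_in[OF assms(1)] assms(2), of "a - N" s "a' - N"]
      shift[of a] shift[of a'] assms(3,4) by auto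
qed

lemma orbit_metastable:
  assumes II: "II_modulus C \<gamma>" and p: "p \<in> C" "T p = p" and x: "x \<in> C"
    and diam: "\<forall>u\<in>C. \<forall>v\<in>C. dist u v \<le> b"
    and c: "1 \<le> c" "b\<^sup>2 \<le> real c * lam" and K: "K = c * (k + 1)\<^sup>2"
  shows "\<exists>N \<le> Theta0 c K g k (maxf \<gamma> (4 * k + 3)) + K.
    (\<forall>i\<in>{N..N + g N}. \<forall>j\<in>{N..N + g N}. dist ((T ^^ i) x) ((T ^^ j) x) \<le> 1 / (real k + 1)) \<and>
    (\<forall>m\<ge>N. dist ((T ^^ m) x) (T ((T ^^ m) x)) \<le> 1 / (real k + 1))"
proof -
  let ?\<Theta> = "Theta0 c K g k" and ?xs = "\<lambda>n. (T ^^ n) x"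
  have rate: "dist (?xs m) (T (?xs m)) \<le> 1 / R" if "0 < R" "real c * R\<^sup>2 \<le> real m" for m R
    using orbit_displacement_rate[OF p x diam _ c(2) that] c(1) by simp
  obtain i j where ij: "i < j" "j \<le> \<gamma> (4 * k + 3)"
    and close: "dist (?xs (?\<Theta> i + K)) (?xs (?\<Theta> j + K)) \<le> 1 / (4 * real k + 4)"
  proof -
    have "?xs (?\<Theta> n + K) \<in> C" for n using orbit_in[OF x] .
    from II[unfolded II_modulus_def, rule_format, of "\<lambda>n. ?xs (?\<Theta> n + K)" "4 * k + 3", OF this] that
    show ?thesis by (auto simp: add_ac)
  qed
  define N where "N = ?\<Theta> i + K"
  define z where "z = ?xs (?\<Theta> j + K)"
  define R where "R = real ((maxf g N + K) * (4 * k + 4))"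
  have "1 \<le> K" using c(1) K by simp
  then have R_pos: "0 < R" unfolding R_def by simp
  have "real c * R\<^sup>2 = real (?\<Theta> (Suc i))" unfolding R_def N_def by simp
  also have "\<dots> \<le> real (?\<Theta> j + K)" unfolding of_nat_le_iff
    using Theta0_mono[of "Suc i" j c K g k] ij(1) by linarith
  finally have z_nearly_fixed: "dist z (T z) \<le> 1 / R"
    unfolding z_def using rate R_pos by blast
  have drift: "real (g N) * dist z (T z) \<le> 1 / (4 * real k + 4)"
  proof -
    have "real (g N) * (4 * real k + 4) \<le> R"
      unfolding R_def using maxf_ge[of g N] by simp
    then have "real (g N) / R \<le> 1 / (4 * real k + 4)" using R_pos by (simp add: divide_simps)
    moreover have "real (g N) * dist z (T z) \<le> real (g N) / R"
      using z_nearly_fixed by (simp add: mult_left_mono divide_inverse)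
    ultimately show ?thesis by linarith
  qed
  have "\<forall>a\<in>{N..N + g N}. \<forall>a'\<in>{N..N + g N}. dist (?xs a) (?xs a') \<le> 1 / (real k + 1)"
  proof (intro ballI)
    fix a a' assume "a \<in> {N..N + g N}" "a' \<in> {N..N + g N}"
    from orbit_window_close[OF x orbit_in[OF x] this, of "?\<Theta> j + K"]
    have "dist (?xs a) (?xs a') \<le> 2 * (1 / (4 * real k + 4) + 1 / (4 * real k + 4))"
      using close drift unfolding N_def z_def by argo
    also have "\<dots> = 1 / (real k + 1)" by (simp add: field_simps)
    finally show "dist (?xs a) (?xs a') \<le> 1 / (real k + 1)" .
  qed
  moreover have "dist (?xs m) (T (?xs m)) \<le> 1 / (real k + 1)" if "N \<le> m" for m
  proof (rule rate)
    have "K \<le> m" using that unfolding N_def by simp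
    then have "real (c * (k + 1)\<^sup>2) \<le> real m" unfolding K of_nat_le_iff .
    then show "real c * (real k + 1)\<^sup>2 \<le> real m" by (simp add: add.commute)
  qed simp
  moreover have "N \<le> ?\<Theta> (maxf \<gamma> (4 * k + 3)) + K"
    unfolding N_def using ij maxf_ge[of \<gamma> "4 * k + 3"] by (simp add: Theta0_mono)
  ultimately show ?thesis by blast
qed

end

theorem corollary7p9:
  fixes X C :: "'a::metric_space set" and \<gamma> g :: "nat \<Rightarrow> nat" and b lam :: real
    and T :: "'a \<Rightarrow> 'a" and x :: 'a and k :: nat
  assumes "CAT0 X" and "C \<subseteq> X"
    and "totally_bounded C" and "II_modulus C \<gamma>"
    and "b > 0" and "\<forall>u\<in>C. \<forall>v\<in>C. dist u v \<le> b"
    and "0 < lam" and "lam < 1"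
    and "T ` C \<subseteq> C" and "firmly_nonexp X lam C T"
    and "\<exists>p\<in>C. T p = p"
    and "x \<in> C"
  shows "let c = nat \<lceil>8 * (b + 1)\<^sup>2 / (lam * (1 - lam))\<rceil>;
             K = c * (k + 1)\<^sup>2;
             xs = (\<lambda>n. (T ^^ n) x)
         in \<exists>N \<le> Theta0 c K g k (maxf \<gamma> (4 * k + 3)) + K.
              (\<forall>i\<in>{N..N + g N}. \<forall>j\<in>{N..N + g N}. dist (xs i) (xs j) \<le> 1 / (real k + 1)) \<and>
              (\<forall>m\<ge>N. dist (xs m) (T (xs m)) \<le> 1 / (real k + 1))"
  \<comment> \<open>Total boundedness is used only through its modulus \<open>\<gamma>\<close>.\<close>
proof -
  interpret firmly_nonexp_self_map X C lam T
    using assms by unfold_locales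
  obtain p where "p \<in> C" "T p = p" using assms(11) by blast
  from orbit_metastable[OF assms(4) this assms(12,6) rate_constant_bounds[OF assms(5,7,8)] refl]
  show ?thesis unfolding Let_def by simp
qed

end
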